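(* Let $(S,\wedge,\vee)$ be a skew lattice. Then the map $r:S\times S\to S\times S$, $r(x,y)=(x\lfloor y\rfloor,\; y)$, is an idempotent set-theoretic solution of the Yang–Baxter equation.
   Context: A skew lattice is a set $S$ with two binary operations $\wedge,\vee$, each idempotent and associative, satisfying the absorption laws $x\wedge(x\vee y)=x=x\vee(x\wedge y)$ and $(x\wedge y)\vee y=y=(x\vee y)\wedge y$ for all $x,y\in S$. For $x,y$ in a skew lattice, the lower update of $x$ by $y$ is $x\lfloor y\rfloor=(y\wedge x\wedge y)\vee x\vee(y\wedge x\wedge y)$. A set-theoretic solution of the Yang–Baxter equation is a pair $(X,r)$ with $X$ a nonempty set and $r:X\times X\to X\times X$ satisfying $(r\times\mathrm{id})\circ(\mathrm{id}\times r)\circ(r\times\mathrm{id})=(\mathrm{id}\times r)\circ(r\times\mathrm{id})\circ(\mathrm{id}\times r)$; it is idempotent if $r^2=r$. *)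

theory Defs
  imports Main
begin

definition skew_lattice :: "('a \<Rightarrow> 'a \<Rightarrow> 'a) \<Rightarrow> ('a \<Rightarrow> 'a \<Rightarrow> 'a) \<Rightarrow> bool" where
  "skew_lattice mt jn \<longleftrightarrow>
     (\<forall>x. mt x x = x) \<and> (\<forall>x. jn x x = x) \<and>
     (\<forall>x y z. mt (mt x y) z = mt x (mt y z)) \<and>
     (\<forall>x y z. jn (jn x y) z = jn x (jn y z)) \<and>
     (\<forall>x y. mt x (jn x y) = x \<and> jn x (mt x y) = x) \<and>
     (\<forall>x y. jn (mt x y) y = y \<and> mt (jn x y) y = y)"

definition lower_update :: "('a \<Rightarrow> 'a \<Rightarrow> 'a) \<Rightarrow> ('a \<Rightarrow> 'a \<Rightarrow> 'a) \<Rightarrow> 'a \<Rightarrow> 'a \<Rightarrow> 'a" where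
  "lower_update mt jn x y = jn (jn (mt (mt y x) y) x) (mt (mt y x) y)"

definition is_YBE_solution :: "('a \<times> 'a \<Rightarrow> 'a \<times> 'a) \<Rightarrow> bool" where
  "is_YBE_solution r \<longleftrightarrow>
     (\<forall>x y z.
        (let r12 = (\<lambda>(a, b, c). (fst (r (a, b)), snd (r (a, b)), c));
             r23 = (\<lambda>(a, b, c). (a, fst (r (b, c)), snd (r (b, c))))
         in (r12 \<circ> r23 \<circ> r12) (x, y, z) = (r23 \<circ> r12 \<circ> r23) (x, y, z)))"

definition idempotent_solution :: "('a \<times> 'a \<Rightarrow> 'a \<times> 'a) \<Rightarrow> bool" where
  "idempotent_solution r \<longleftrightarrow> is_YBE_solution r \<and> r \<circ> r = r"

end

theory Submission
  imports Defs
begin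

text \<open>
  Write \<open>x \<preceq> y\<close> for \<open>x \<sqinter> y \<sqinter> x = x\<close>; by absorption this is equivalent to
  \<open>y \<squnion> x \<squnion> y = y\<close>, and since both operations are regular bands it is a preorder along
  which sandwiches can be pushed: \<open>v \<preceq> y\<close> gives \<open>v \<sqinter> t \<sqinter> v = v \<sqinter> (y \<sqinter> t \<sqinter> y) \<sqinter> v\<close>, and
  dually for joins.  The update \<open>x\<lfloor>y\<rfloor> = a \<squnion> x \<squnion> a\<close>, \<open>a = y \<sqinter> x \<sqinter> y\<close>, satisfies
  \<open>y \<sqinter> x\<lfloor>y\<rfloor> \<sqinter> y = a\<close>, which gives \<open>x\<lfloor>y\<rfloor>\<lfloor>y\<rfloor> = x\<lfloor>y\<rfloor>\<close>.  Moreover \<open>y\<lfloor>z\<rfloor>\<close> lies in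
  the same \<open>\<preceq>\<close>-class as \<open>y\<close>, and for every \<open>v\<close> in that class the two sandwich rules turn
  \<open>x\<lfloor>y\<rfloor>\<lfloor>v\<rfloor>\<close> into \<open>x\<lfloor>v\<rfloor>\<close>.  These two identities are exactly idempotence of \<open>r\<close> and the
  braid relation.
\<close>

locale skew_lat =
  fixes mt :: "'a \<Rightarrow> 'a \<Rightarrow> 'a" (infixl "\<sqinter>" 70)
    and jn :: "'a \<Rightarrow> 'a \<Rightarrow> 'a" (infixl "\<squnion>" 65)
  assumes meet_idem: "x \<sqinter> x = x"
    and join_idem: "x \<squnion> x = x"
    and meet_assoc: "x \<sqinter> y \<sqinter> z = x \<sqinter> (y \<sqinter> z)"
    and join_assoc: "x \<squnion> y \<squnion> z = x \<squnion> (y \<squnion> z)"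
    and meet_join_absorb: "x \<sqinter> (x \<squnion> y) = x"
    and join_meet_absorb: "x \<squnion> (x \<sqinter> y) = x"
    and meet_join_absorb': "x \<sqinter> y \<squnion> y = y"
    and join_meet_absorb': "(x \<squnion> y) \<sqinter> y = y"

sublocale skew_lat \<subseteq> dual: skew_lat "(\<squnion>)" "(\<sqinter>)"
  by unfold_locales (fact join_idem meet_idem join_assoc meet_assoc join_meet_absorb
      meet_join_absorb join_meet_absorb' meet_join_absorb')+

lemma skew_latI: "skew_lattice mt jn \<Longrightarrow> skew_lat mt jn"
  unfolding skew_lattice_def skew_lat_def by blast

context skew_lat
begin

lemma join_join_meet: "x \<squnion> (x \<sqinter> y \<squnion> z) = x \<squnion> z"
  by (simp add: join_meet_absorb flip: join_assoc)

lemma join_meet_join_cancel: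
  assumes "p \<squnion> z = z" and "z \<squnion> p = p"
  shows "p \<squnion> (z \<sqinter> a) \<squnion> z = z"
  by (metis assms join_assoc join_join_meet join_meet_absorb')

lemma join_join_meet_join: "z \<squnion> u \<squnion> (z \<sqinter> a \<squnion> z) = z \<squnion> u \<squnion> z"
proof -
  define p where "p = (z \<squnion> u) \<sqinter> z"
  have "p \<sqinter> z = p"
    unfolding p_def by (simp add: meet_assoc meet_idem)
  have "z \<sqinter> p = z"
    unfolding p_def by (simp add: meet_idem meet_join_absorb flip: meet_assoc)
  then have "p \<squnion> z = z" and "z \<squnion> p = p"
    using \<open>p \<sqinter> z = p\<close> by (metis meet_join_absorb')+
  have "z \<squnion> u \<squnion> (z \<sqinter> a \<squnion> z) = z \<squnion> u \<squnion> (p \<squnion> (z \<sqinter> a \<squnion> z))"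
    unfolding p_def by (rule join_join_meet[symmetric])
  also have "\<dots> = z \<squnion> u \<squnion> z"
    using join_meet_join_cancel[OF \<open>p \<squnion> z = z\<close> \<open>z \<squnion> p = p\<close>] by (simp add: join_assoc)
  finally show ?thesis .
qed

lemma join_sandwich_imp_meet: "x \<squnion> y \<squnion> x = x \<Longrightarrow> y \<sqinter> x \<sqinter> y = y"
  by (metis join_meet_absorb join_meet_absorb' meet_assoc meet_join_absorb)

lemma join_regular: "z \<squnion> u \<squnion> z \<squnion> w \<squnion> z = z \<squnion> u \<squnion> w \<squnion> z"
proof -
  define s where "s = z \<sqinter> (w \<squnion> z)"
  have "s \<sqinter> z = z"
    unfolding s_def by (simp add: meet_assoc meet_idem join_meet_absorb')
  then have "s \<squnion> z = s"
    using join_meet_absorb[of s z] by simp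
  then have "z \<squnion> u \<squnion> s = z \<squnion> u \<squnion> z"
    using join_join_meet_join[of z u "w \<squnion> z"] by (simp add: s_def)
  moreover have "s \<squnion> (w \<squnion> z) = w \<squnion> z"
    unfolding s_def by (rule meet_join_absorb')
  ultimately show ?thesis
    by (metis join_assoc)
qed

end

text \<open>Facts of the \<open>dual\<close> interpretation become visible only after reopening the context.\<close>

context skew_lat
begin

lemma meet_regular: "z \<sqinter> u \<sqinter> z \<sqinter> w \<sqinter> z = z \<sqinter> u \<sqinter> w \<sqinter> z"
  by (fact dual.join_regular)

lemma meet_sandwich_idem: "x \<sqinter> y \<sqinter> x \<sqinter> y \<sqinter> x = x \<sqinter> y \<sqinter> x"
  by (metis meet_assoc meet_idem)

definition D_le :: "'a \<Rightarrow> 'a \<Rightarrow> bool" (infix "\<preceq>" 50)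
  where "x \<preceq> y \<longleftrightarrow> x \<sqinter> y \<sqinter> x = x"

lemma D_le_iff_join: "x \<preceq> y \<longleftrightarrow> y \<squnion> x \<squnion> y = y"
  unfolding D_le_def using join_sandwich_imp_meet dual.join_sandwich_imp_meet by blast

lemma sandwich_D_le_inner: "x \<sqinter> y \<sqinter> x \<preceq> y"
  unfolding D_le_def by (metis meet_assoc meet_idem)

lemma sandwich_D_le_outer: "x \<sqinter> y \<sqinter> x \<preceq> x"
  unfolding D_le_def by (metis meet_assoc meet_idem)

lemma D_le_sandwich_through:
  assumes "v \<preceq> y"
  shows "v \<sqinter> t \<sqinter> v = v \<sqinter> (y \<sqinter> t \<sqinter> y) \<sqinter> v"
proof -
  have v: "v \<sqinter> y \<sqinter> v = v"
    using assms unfolding D_le_def .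
  have "v \<sqinter> t \<sqinter> v = (v \<sqinter> y \<sqinter> v) \<sqinter> t \<sqinter> (v \<sqinter> y \<sqinter> v)"
    by (simp only: v)
  also have "\<dots> = (v \<sqinter> y \<sqinter> v \<sqinter> t \<sqinter> v) \<sqinter> y \<sqinter> v"
    by (simp add: meet_assoc)
  also have "\<dots> = v \<sqinter> (y \<sqinter> t) \<sqinter> v \<sqinter> y \<sqinter> v"
    unfolding meet_regular[of v y t] by (simp add: meet_assoc)
  also have "\<dots> = v \<sqinter> (y \<sqinter> t) \<sqinter> y \<sqinter> v"
    by (rule meet_regular)
  finally show ?thesis
    by (simp add: meet_assoc)
qed

lemma D_le_trans: "x \<preceq> y \<Longrightarrow> y \<preceq> z \<Longrightarrow> x \<preceq> z"
  using D_le_sandwich_through[of x y z] unfolding D_le_def by simp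

lemma D_le_sandwich: "x \<preceq> y \<Longrightarrow> x \<preceq> y \<sqinter> x \<sqinter> y"
  unfolding D_le_def by (metis meet_assoc meet_sandwich_idem)

end

context skew_lat
begin

lemma join_D_le_sandwich_through:
  assumes "y \<preceq> v"
  shows "v \<squnion> t \<squnion> v = v \<squnion> (y \<squnion> t \<squnion> y) \<squnion> v"
  using assms unfolding D_le_iff_join by (rule dual.D_le_sandwich_through[unfolded dual.D_le_def])

abbreviation lower_upd :: "'a \<Rightarrow> 'a \<Rightarrow> 'a"
  where "lower_upd \<equiv> lower_update (\<sqinter>) (\<squnion>)"

lemma lower_upd_eq: "lower_upd x y = y \<sqinter> x \<sqinter> y \<squnion> x \<squnion> y \<sqinter> x \<sqinter> y"
  by (simp add: lower_update_def)

lemma meet_sandwich_lower_upd: "y \<sqinter> lower_upd x y \<sqinter> y = y \<sqinter> x \<sqinter> y"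
proof -
  define a where "a = y \<sqinter> x \<sqinter> y"
  define w where "w = lower_upd x y"
  define c where "c = y \<sqinter> w \<sqinter> y"
  have w: "w = a \<squnion> x \<squnion> a"
    unfolding w_def a_def by (rule lower_upd_eq)
  have "x \<squnion> a \<squnion> x = x"
    using sandwich_D_le_inner[of y x] unfolding a_def D_le_iff_join .
  then have "x \<squnion> w \<squnion> x = x"
    unfolding w using join_regular[of x a a] by (simp add: join_idem join_assoc)
  then have "w \<preceq> x"
    unfolding D_le_iff_join .
  then have "c \<preceq> x"
    unfolding c_def by (rule D_le_trans[OF sandwich_D_le_inner])
  have "c \<sqinter> a \<sqinter> c = c \<sqinter> x \<sqinter> c"
    unfolding a_def c_def using D_le_sandwich_through[OF sandwich_D_le_outer[of y w], of x] by simp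
  also have "\<dots> = c"
    using \<open>c \<preceq> x\<close> unfolding D_le_def .
  finally have cac: "c \<sqinter> a \<sqinter> c = c" .
  have "a \<sqinter> w = a"
    unfolding w by (simp add: join_assoc meet_join_absorb)
  have "w \<sqinter> a = a"
    unfolding w by (rule join_meet_absorb')
  have "y \<sqinter> a = a" and "a \<sqinter> y = a"
    unfolding a_def by (metis meet_assoc meet_idem)+
  have "c \<sqinter> a = a"
    unfolding c_def by (metis meet_assoc \<open>y \<sqinter> a = a\<close> \<open>w \<sqinter> a = a\<close>)
  moreover have "a \<sqinter> c = a"
    unfolding c_def by (metis meet_assoc \<open>a \<sqinter> y = a\<close> \<open>a \<sqinter> w = a\<close>)
  ultimately have "c = a"
    using cac by simp
  then show ?thesis
    unfolding c_def w_def a_def .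
qed

lemma lower_upd_idem: "lower_upd (lower_upd x y) y = lower_upd x y"
proof -
  have "lower_upd (lower_upd x y) y = y \<sqinter> x \<sqinter> y \<squnion> lower_upd x y \<squnion> y \<sqinter> x \<sqinter> y"
    unfolding lower_upd_eq[of "lower_upd x y"] meet_sandwich_lower_upd ..
  also have "\<dots> = lower_upd x y"
    unfolding lower_upd_eq[of x y] by (metis join_assoc join_idem)
  finally show ?thesis .
qed

lemma lower_upd_D_equiv: "lower_upd y z \<preceq> y" "y \<preceq> lower_upd y z"
proof -
  define b where "b = z \<sqinter> y \<sqinter> z"
  have yby: "y \<squnion> b \<squnion> y = y"
    using sandwich_D_le_inner[of z y] unfolding b_def D_le_iff_join .
  have upd: "lower_upd y z = b \<squnion> y \<squnion> b"
    unfolding b_def by (rule lower_upd_eq)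
  show "lower_upd y z \<preceq> y"
    unfolding D_le_iff_join upd by (metis yby join_assoc)
  show "y \<preceq> lower_upd y z"
    unfolding D_le_iff_join upd by (metis yby join_assoc)
qed

lemma lower_upd_lower_upd_D_equiv:
  assumes "v \<preceq> y" and "y \<preceq> v"
  shows "lower_upd (lower_upd x y) v = lower_upd x v"
proof -
  define a where "a = y \<sqinter> x \<sqinter> y"
  define a' where "a' = v \<sqinter> x \<sqinter> v"
  define w where "w = lower_upd x y"
  have "v \<sqinter> w \<sqinter> v = v \<sqinter> a \<sqinter> v"
    using D_le_sandwich_through[OF assms(1), of w] unfolding w_def
    by (simp add: meet_sandwich_lower_upd a_def)
  also have "\<dots> = a'"
    using D_le_sandwich_through[OF assms(1), of x] unfolding a_def a'_def by simp
  finally have vwv: "v \<sqinter> w \<sqinter> v = a'" .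
  have "a \<preceq> v"
    unfolding a_def using sandwich_D_le_outer assms(2) by (rule D_le_trans)
  then have "a \<preceq> a'"
    using D_le_sandwich D_le_sandwich_through[OF assms(1), of x]
    unfolding a_def a'_def by metis
  have "lower_upd w v = a' \<squnion> w \<squnion> a'"
    unfolding lower_upd_eq vwv ..
  also have "\<dots> = a' \<squnion> (a \<squnion> x \<squnion> a) \<squnion> a'"
    unfolding w_def a_def lower_upd_eq ..
  also have "\<dots> = a' \<squnion> x \<squnion> a'"
    using join_D_le_sandwich_through[OF \<open>a \<preceq> a'\<close>] by simp
  also have "\<dots> = lower_upd x v"
    unfolding lower_upd_eq a'_def ..
  finally show ?thesis
    unfolding w_def .
qed

lemma lower_upd_braid:
  "lower_upd (lower_upd x y) (lower_upd y z) = lower_upd x (lower_upd y z)"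
  using lower_upd_D_equiv by (rule lower_upd_lower_upd_D_equiv)

end

theorem mainTheorem3:
  fixes mt jn :: "'a \<Rightarrow> 'a \<Rightarrow> 'a"
  assumes "skew_lattice mt jn"
  shows "idempotent_solution (\<lambda>(x, y). (lower_update mt jn x y, y))"
proof -
  interpret skew_lat mt jn
    using assms by (rule skew_latI)
  show ?thesis
    unfolding idempotent_solution_def is_YBE_solution_def
    by (auto simp: Let_def lower_upd_idem lower_upd_braid)
qed

end
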